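(* Let $s\in(0,1)$, $R>0$, and let $f:\mathbb R^d\to\mathbb R$ satisfy $\sup_{x,y\in[0,1]^d,x\ne y}\frac{|f(x)-f(y)|}{\|x-y\|^s}\le R$ and the periodicity condition: for every $x\in[0,1]^d$ and every $i$ with $x_i\in\{0,1\}$, $f(x)=f(x_1,\dots,x_{i-1},1-x_i,x_{i+1},\dots,x_d)$. Then its Fourier coefficients $\theta_k(f)=\int_{[0,1]^d}f(x)e^{-i2\pi\langle k,x\rangle}dx$ satisfy, for every integer $M\ge0$, $$\sum_{k\in\mathbb Z^d\setminus\{-M,\dots,M\}^d}|\theta_k(f)|^2\le C(s)\,d\,R^2(M+1)^{-2s},\qquad C(s)=\frac{2^{2s}3^{-s}}{1-2^{-2s}}.$$ *)

theory Defs
  imports "HOL-Analysis.Analysis"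
begin

definition fourier_coeff :: "(real ^ 'n \<Rightarrow> real) \<Rightarrow> int ^ 'n \<Rightarrow> complex" where
  "fourier_coeff f k =
     integral (cbox (0::real^'n) One)
       (\<lambda>x. complex_of_real (f x) * exp (- \<i> * complex_of_real (2 * pi * (\<Sum>i\<in>UNIV. of_int (k $ i) * x $ i))))"

definition C_const :: "real \<Rightarrow> real" where
  "C_const s = 2 powr (2 * s) * 3 powr (- s) / (1 - 2 powr (- 2 * s))"

end

theory Submission
  imports Defs
begin

text \<open>Fix a coordinate \<open>i\<close> and \<open>N \<ge> 1\<close>, put \<open>t = 1/(3N)\<close> and let \<open>g = f(\<cdot> + t e\<^sub>i) - f\<close>,
  the translation being taken on the torus. The periodicity condition makes \<open>g\<close> continuous,
  and the Hoelder bound gives \<open>\<integral> g\<^sup>2 \<le> R\<^sup>2 t\<^sup>2\<^sup>s (1 + 3t) \<le> 2 R\<^sup>2 t\<^sup>2\<^sup>s\<close>.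
  Since \<open>\<theta>\<^sub>k(g) = (exp (2 \<pi> \<i> k\<^sub>i t) - 1) \<theta>\<^sub>k(f)\<close> and this factor has modulus at least
  \<open>\<surd>3\<close> when \<open>N \<le> |k\<^sub>i| < 2N\<close>, Bessel's inequality bounds the sum of \<open>|\<theta>\<^sub>k(f)|\<^sup>2\<close> over that
  block by \<open>2/3 R\<^sup>2 (3N)\<^sup>-\<^sup>2\<^sup>s\<close>. The blocks \<open>N = 2\<^sup>j (M + 1)\<close> cover \<open>|k\<^sub>i| > M\<close> and their
  bounds form a geometric series; a union bound over the \<open>d\<close> coordinates gives the claim
  with the constant \<open>2/3 \<cdot> 3\<^sup>-\<^sup>2\<^sup>s / (1 - 2\<^sup>-\<^sup>2\<^sup>s)\<close>, which is at most \<open>C(s)\<close>.\<close>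

section \<open>Slabs of the unit cube and translation on the torus\<close>

lemma One_cart: "(One :: real^'n) = 1"
  by (simp add: Cart_1)

definition lower_slab :: "'n \<Rightarrow> real \<Rightarrow> (real^'n) set" where
  "lower_slab i a = cbox 0 (\<chi> j. if j = i then a else 1)"

definition upper_slab :: "'n \<Rightarrow> real \<Rightarrow> (real^'n) set" where
  "upper_slab i a = cbox (\<chi> j. if j = i then a else 0) One"

lemma mem_lower_slab: "a \<le> 1 \<Longrightarrow> x \<in> lower_slab i a \<longleftrightarrow> x \<in> cbox 0 One \<and> x $ i \<le> a"
  unfolding lower_slab_def mem_box_cart One_cart by (simp, smt (verit))

lemma mem_upper_slab: "0 \<le> a \<Longrightarrow> x \<in> upper_slab i a \<longleftrightarrow> x \<in> cbox 0 One \<and> a \<le> x $ i"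
  unfolding upper_slab_def mem_box_cart One_cart by (simp, smt (verit))

lemma content_lower_slab: "0 \<le> a \<Longrightarrow> measure lborel (lower_slab i a) = a"
proof -
  assume "0 \<le> a"
  then have "0 \<in> lower_slab i a"
    unfolding lower_slab_def by (simp add: mem_box_cart)
  then have "measure lborel (lower_slab i a) = (\<Prod>j\<in>UNIV. if j = i then a else 1)"
    unfolding lower_slab_def by (subst content_cbox_cart) (auto cong: if_cong)
  then show ?thesis by simp
qed

lemma content_upper_slab: "a \<le> 1 \<Longrightarrow> measure lborel (upper_slab i a) = 1 - a"
proof -
  assume "a \<le> 1"
  then have "One \<in> upper_slab i a"
    unfolding upper_slab_def by (simp add: mem_box_cart One_cart)
  then have "measure lborel (upper_slab i a) = (\<Prod>j\<in>UNIV. if j = i then 1 - a else 1)"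
    unfolding upper_slab_def by (subst content_cbox_cart) (auto simp: One_cart if_distrib cong: if_cong)
  then show ?thesis by simp
qed

lemma unit_cube_eq_slabs:
  "0 \<le> a \<Longrightarrow> a \<le> 1 \<Longrightarrow> cbox 0 One = lower_slab i a \<union> upper_slab i a"
  by (auto simp: mem_lower_slab mem_upper_slab)

lemma has_integral_unit_cube_split:
  fixes h :: "real^'n \<Rightarrow> 'b::real_normed_vector"
  assumes "0 \<le> a" "a \<le> 1"
    and "(h has_integral I) (lower_slab i a)" "(h has_integral J) (upper_slab i a)"
  shows "(h has_integral (I + J)) (cbox 0 One)"
proof -
  have "cbox 0 One \<inter> {x. x \<bullet> axis i 1 \<le> a} = lower_slab i a"
    and "cbox 0 One \<inter> {x. a \<le> x \<bullet> axis i 1} = upper_slab i a"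
    using assms(1,2) by (auto simp: mem_lower_slab mem_upper_slab inner_axis)
  moreover have "axis i (1::real) \<in> Basis" by simp
  ultimately show ?thesis
    using has_integral_split[of h I 0 One "axis i 1" a J] assms(3,4) by simp
qed

lemma integrable_on_slabs:
  fixes h :: "real^'n \<Rightarrow> 'b::banach"
  assumes "continuous_on (cbox 0 One) h" "0 \<le> t" "t \<le> 1"
  shows "h integrable_on lower_slab i t" "h integrable_on upper_slab i t"
proof -
  have "lower_slab i t \<subseteq> cbox 0 One" "upper_slab i t \<subseteq> cbox 0 One"
    using assms(2,3) by (auto simp: mem_lower_slab mem_upper_slab)
  then have "continuous_on (lower_slab i t) h" "continuous_on (upper_slab i t) h"
    by (simp_all add: continuous_on_subset[OF assms(1)])
  then show "h integrable_on lower_slab i t" "h integrable_on upper_slab i t"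
    unfolding lower_slab_def upper_slab_def by (simp_all add: integrable_continuous)
qed

lemma integral_cbox_le_content_mult:
  fixes \<phi> :: "'a::euclidean_space \<Rightarrow> real"
  assumes "\<phi> integrable_on cbox a b" "\<And>x. x \<in> cbox a b \<Longrightarrow> \<phi> x \<le> c"
  shows "integral (cbox a b) \<phi> \<le> measure lborel (cbox a b) * c"
  using has_integral_le[OF integrable_integral[OF assms(1)] has_integral_const] assms(2) by simp

lemma integral_unit_cube_eq_slabs:
  fixes \<phi> :: "real^'n \<Rightarrow> real"
  assumes "continuous_on (cbox 0 One) \<phi>" "0 \<le> a" "a \<le> 1"
  shows "integral (cbox 0 One) \<phi> = integral (lower_slab i a) \<phi> + integral (upper_slab i a) \<phi>"
proof -
  note integrable = integrable_on_slabs[OF assms, where i = i]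
  show ?thesis
    by (rule integral_unique[OF has_integral_unit_cube_split[OF assms(2,3)
          integrable_integral[OF integrable(1)] integrable_integral[OF integrable(2)]]])
qed

lemma integral_lower_slab_le:
  fixes \<phi> :: "real^'n \<Rightarrow> real"
  assumes "continuous_on (cbox 0 One) \<phi>" "0 \<le> a" "a \<le> 1"
    and "\<And>x. x \<in> cbox 0 One \<Longrightarrow> x $ i \<le> a \<Longrightarrow> \<phi> x \<le> c"
  shows "integral (lower_slab i a) \<phi> \<le> a * c"
proof -
  have "integral (lower_slab i a) \<phi> \<le> measure lborel (lower_slab i a) * c"
    using integrable_on_slabs(1)[OF assms(1-3)] unfolding lower_slab_def
  proof (rule integral_cbox_le_content_mult)
    fix x assume "x \<in> cbox 0 (\<chi> j. if j = i then a else 1)"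
    then have "x \<in> lower_slab i a" by (simp add: lower_slab_def)
    then show "\<phi> x \<le> c" using assms(3,4) by (simp add: mem_lower_slab)
  qed
  then show ?thesis using assms(2) by (simp add: content_lower_slab)
qed

lemma integral_upper_slab_le:
  fixes \<phi> :: "real^'n \<Rightarrow> real"
  assumes "continuous_on (cbox 0 One) \<phi>" "0 \<le> a" "a \<le> 1"
    and "\<And>x. x \<in> cbox 0 One \<Longrightarrow> a \<le> x $ i \<Longrightarrow> \<phi> x \<le> c"
  shows "integral (upper_slab i a) \<phi> \<le> (1 - a) * c"
proof -
  have "integral (upper_slab i a) \<phi> \<le> measure lborel (upper_slab i a) * c"
    using integrable_on_slabs(2)[OF assms(1-3)] unfolding upper_slab_def
  proof (rule integral_cbox_le_content_mult)
    fix x assume "x \<in> cbox (\<chi> j. if j = i then a else 0) One"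
    then have "x \<in> upper_slab i a" by (simp add: upper_slab_def)
    then show "\<phi> x \<le> c" using assms(2,4) by (simp add: mem_upper_slab)
  qed
  then show ?thesis using assms(3) by (simp add: content_upper_slab)
qed

lemma translate_lower_slab:
  assumes "x \<in> lower_slab i (1 - t)" "0 \<le> t"
  shows "x + t *\<^sub>R axis i 1 \<in> upper_slab i t"
  unfolding upper_slab_def mem_box_cart One_cart
proof
  fix j
  have "0 \<le> x $ j \<and> x $ j \<le> (if j = i then 1 - t else 1)"
    using assms(1) by (simp add: lower_slab_def mem_box_cart)
  then show "(\<chi> j. if j = i then t else 0) $ j \<le> (x + t *\<^sub>R axis i 1) $ j \<and>
      (x + t *\<^sub>R axis i 1) $ j \<le> 1 $ j"
    using assms(2) by (auto simp: axis_def)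
qed

lemma translate_upper_slab:
  assumes "x \<in> upper_slab i (1 - t)" "t \<le> 1"
  shows "x + (t - 1) *\<^sub>R axis i 1 \<in> lower_slab i t"
  unfolding lower_slab_def mem_box_cart One_cart
proof
  fix j
  have "(if j = i then 1 - t else 0) \<le> x $ j \<and> x $ j \<le> 1"
    using assms(1) by (simp add: upper_slab_def mem_box_cart One_cart)
  then show "0 $ j \<le> (x + (t - 1) *\<^sub>R axis i 1) $ j \<and>
      (x + (t - 1) *\<^sub>R axis i 1) $ j \<le> (\<chi> j. if j = i then t else 1) $ j"
    using assms(2) by (auto simp: axis_def)
qed

lemma has_integral_translate_upper_slab:
  assumes "(h has_integral I) (upper_slab i t)"
  shows "((\<lambda>x. h (x + t *\<^sub>R axis i 1)) has_integral I) (lower_slab i (1 - t))"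
proof -
  have "0 + t *\<^sub>R axis i 1 = (\<chi> j. if j = i then t else 0)"
    and "(\<chi> j. if j = i then 1 - t else 1) + t *\<^sub>R axis i 1 = One"
    by (auto simp: vec_eq_iff axis_def One_cart)
  then show ?thesis
    using assms has_integral_shift_cbox_iff[of h "t *\<^sub>R axis i 1"]
    by (simp add: lower_slab_def upper_slab_def o_def add.commute)
qed

lemma has_integral_translate_lower_slab:
  assumes "(h has_integral I) (lower_slab i t)"
  shows "((\<lambda>x. h (x + (t - 1) *\<^sub>R axis i 1)) has_integral I) (upper_slab i (1 - t))"
proof -
  have "(\<chi> j. if j = i then 1 - t else 0) + (t - 1) *\<^sub>R axis i 1 = 0"
    and "One + (t - 1) *\<^sub>R axis i 1 = (\<chi> j. if j = i then t else 1)"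
    by (auto simp: vec_eq_iff axis_def One_cart)
  then show ?thesis
    using assms has_integral_shift_cbox_iff[of h "(t - 1) *\<^sub>R axis i 1"]
    by (simp add: lower_slab_def upper_slab_def o_def add.commute)
qed

text \<open>Translation by \<open>t\<close> in direction \<open>i\<close> on the torus \<open>\<real>\<^sup>n / \<int>\<^sup>n\<close>, represented on its
  fundamental domain \<open>[0,1]\<^sup>n\<close>.\<close>
definition cube_shift :: "real \<Rightarrow> 'n \<Rightarrow> real^'n \<Rightarrow> real^'n" where
  "cube_shift t i x = (if x $ i + t \<le> 1 then x + t *\<^sub>R axis i 1 else x + (t - 1) *\<^sub>R axis i 1)"

definition cube_periodic_in :: "'n \<Rightarrow> (real^'n \<Rightarrow> 'a) \<Rightarrow> bool" where
  "cube_periodic_in i h \<longleftrightarrow> (\<forall>x\<in>cbox 0 One. x $ i = 0 \<longrightarrow> h (x + axis i 1) = h x)"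

lemma cube_shift_nth:
  "cube_shift t i x $ j = (if j = i then (if x $ i + t \<le> 1 then x $ i + t else x $ i + t - 1) else x $ j)"
  by (simp add: cube_shift_def axis_def)

lemma cube_shift_mem_unit_cube:
  assumes "x \<in> cbox 0 One" "0 \<le> t" "t \<le> 1"
  shows "cube_shift t i x \<in> cbox 0 One"
  unfolding mem_box_cart One_cart
proof
  fix j
  have "0 \<le> x $ j \<and> x $ j \<le> 1" "0 \<le> x $ i \<and> x $ i \<le> 1"
    using assms(1) by (simp_all add: mem_box_cart One_cart)
  then show "0 $ j \<le> cube_shift t i x $ j \<and> cube_shift t i x $ j \<le> 1 $ j"
    using assms(2,3) by (auto simp: cube_shift_nth)
qed

lemma cube_shift_lower_slab:
  "x \<in> lower_slab i (1 - t) \<Longrightarrow> 0 \<le> t \<Longrightarrow> cube_shift t i x = x + t *\<^sub>R axis i 1"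
  by (simp add: cube_shift_def mem_lower_slab)

lemma cube_shift_upper_slab:
  assumes "cube_periodic_in i h" "x \<in> upper_slab i (1 - t)" "t \<le> 1"
  shows "h (cube_shift t i x) = h (x + (t - 1) *\<^sub>R axis i 1)"
proof (cases "x $ i + t \<le> 1")
  case True
  let ?y = "x + (t - 1) *\<^sub>R axis i 1"
  have "x $ i = 1 - t" using True assms(2,3) by (simp add: mem_upper_slab)
  then have "?y \<in> cbox 0 One" "?y $ i = 0" "cube_shift t i x = ?y + axis i 1"
    using assms(2,3) True
    by (auto simp: mem_upper_slab mem_box_cart One_cart cube_shift_def axis_def vec_eq_iff)
  then show ?thesis using assms(1) by (simp add: cube_periodic_in_def)
qed (simp add: cube_shift_def)

lemma continuous_on_cube_shift:
  fixes h :: "real^'n \<Rightarrow> 'b::topological_space"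
  assumes h: "continuous_on (cbox 0 One) h" "cube_periodic_in i h" and t: "0 \<le> t" "t \<le> 1"
  shows "continuous_on (cbox 0 One) (\<lambda>x. h (cube_shift t i x))"
proof -
  have "continuous_on (lower_slab i (1 - t)) (\<lambda>x. h (x + t *\<^sub>R axis i 1))"
  proof (rule continuous_on_compose2[OF h(1)])
    show "(\<lambda>x. x + t *\<^sub>R axis i 1) ` lower_slab i (1 - t) \<subseteq> cbox 0 One"
      using translate_lower_slab t by (fastforce simp: mem_upper_slab)
  qed (intro continuous_intros)
  then have lower: "continuous_on (lower_slab i (1 - t)) (\<lambda>x. h (cube_shift t i x))"
    by (rule continuous_on_eq) (use t in \<open>simp add: cube_shift_lower_slab\<close>)
  have "continuous_on (upper_slab i (1 - t)) (\<lambda>x. h (x + (t - 1) *\<^sub>R axis i 1))"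
  proof (rule continuous_on_compose2[OF h(1)])
    show "(\<lambda>x. x + (t - 1) *\<^sub>R axis i 1) ` upper_slab i (1 - t) \<subseteq> cbox 0 One"
      using translate_upper_slab t by (fastforce simp: mem_lower_slab)
  qed (intro continuous_intros)
  then have upper: "continuous_on (upper_slab i (1 - t)) (\<lambda>x. h (cube_shift t i x))"
    by (rule continuous_on_eq) (use t h(2) in \<open>simp add: cube_shift_upper_slab\<close>)
  have "continuous_on (lower_slab i (1 - t) \<union> upper_slab i (1 - t)) (\<lambda>x. h (cube_shift t i x))"
    by (rule continuous_on_closed_Un[OF _ _ lower upper]) (simp_all add: lower_slab_def upper_slab_def closed_cbox)
  moreover have "cbox 0 One = lower_slab i (1 - t) \<union> upper_slab i (1 - t)"
    using t by (intro unit_cube_eq_slabs) auto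
  ultimately show ?thesis by metis
qed

text \<open>The slab \<open>x\<^sub>i \<le> 1 - t\<close> is translated onto \<open>x\<^sub>i \<ge> t\<close> and the slab \<open>x\<^sub>i \<ge> 1 - t\<close> onto
  \<open>x\<^sub>i \<le> t\<close>.\<close>
lemma has_integral_cube_shift:
  fixes h :: "real^'n \<Rightarrow> 'b::banach"
  assumes h: "continuous_on (cbox 0 One) h" "cube_periodic_in i h" and t: "0 \<le> t" "t \<le> 1"
  shows "((\<lambda>x. h (cube_shift t i x)) has_integral integral (cbox 0 One) h) (cbox 0 One)"
proof -
  define I J where "I = integral (lower_slab i t) h" and "J = integral (upper_slab i t) h"
  have I: "(h has_integral I) (lower_slab i t)" and J: "(h has_integral J) (upper_slab i t)"
    unfolding I_def J_def using integrable_on_slabs[OF h(1) t] by (simp_all add: integrable_integral)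
  have total: "integral (cbox 0 One) h = I + J"
    using has_integral_unit_cube_split[OF t I J] by (rule integral_unique)
  have lower: "((\<lambda>x. h (cube_shift t i x)) has_integral J) (lower_slab i (1 - t))"
    using has_integral_translate_upper_slab[OF J]
    by (rule has_integral_eq[rotated]) (use t in \<open>simp add: cube_shift_lower_slab\<close>)
  have upper: "((\<lambda>x. h (cube_shift t i x)) has_integral I) (upper_slab i (1 - t))"
    using has_integral_translate_lower_slab[OF I]
    by (rule has_integral_eq[rotated]) (use t h(2) in \<open>simp add: cube_shift_upper_slab\<close>)
  have "((\<lambda>x. h (cube_shift t i x)) has_integral (J + I)) (cbox 0 One)"
    by (rule has_integral_unit_cube_split[OF _ _ lower upper]) (use t in auto)
  then show ?thesis by (simp add: total add.commute)
qed

section \<open>Fourier kernels and Bessel's inequality\<close>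

definition fourier_kernel :: "int^'n \<Rightarrow> real^'n \<Rightarrow> complex" where
  "fourier_kernel k x = exp (- \<i> * of_real (2 * pi * (\<Sum>j\<in>UNIV. of_int (k $ j) * x $ j)))"

lemma fourier_coeff_eq_integral_kernel:
  "fourier_coeff f k = integral (cbox 0 One) (\<lambda>x. of_real (f x) * fourier_kernel k x)"
  by (simp add: fourier_coeff_def fourier_kernel_def)

lemma continuous_on_fourier_kernel [continuous_intros]: "continuous_on S (fourier_kernel k)"
  unfolding fourier_kernel_def by (intro continuous_intros)

lemma exp_minus_i_add_int_period:
  "exp (- \<i> * of_real (a + 2 * pi * of_int m)) = exp (- \<i> * of_real a)"
proof -
  have "- \<i> * of_real (a + 2 * pi * of_int m) = - \<i> * of_real a + \<i> * (of_int (- m) * (of_real pi * 2))"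
    by (simp add: algebra_simps)
  then show ?thesis by (simp only: exp_plus_2pin)
qed

lemma fourier_kernel_add_axis:
  "fourier_kernel k (x + c *\<^sub>R axis i 1) = exp (- \<i> * of_real (2 * pi * of_int (k $ i) * c)) * fourier_kernel k x"
proof -
  have "(\<Sum>j\<in>UNIV. of_int (k $ j) * (x + c *\<^sub>R axis i 1) $ j)
      = (\<Sum>j\<in>UNIV. of_int (k $ j) * x $ j + (if j = i then of_int (k $ i) * c else 0))"
    by (rule sum.cong) (auto simp: axis_def algebra_simps)
  also have "\<dots> = (\<Sum>j\<in>UNIV. of_int (k $ j) * x $ j) + of_int (k $ i) * c"
    by (simp add: sum.distrib)
  finally show ?thesis
    unfolding fourier_kernel_def by (simp add: algebra_simps flip: exp_add)
qed

lemma cube_periodic_in_fourier_kernel: "cube_periodic_in i (fourier_kernel k)"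
  unfolding cube_periodic_in_def
  using fourier_kernel_add_axis[of k _ 1 i] exp_minus_i_add_int_period[of 0 "k $ i"]
  by (simp add: mult.commute)

lemma fourier_kernel_cube_shift:
  "fourier_kernel k (cube_shift t i x) = exp (- \<i> * of_real (2 * pi * of_int (k $ i) * t)) * fourier_kernel k x"
proof -
  have "exp (- \<i> * of_real (2 * pi * of_int (k $ i) * (t - 1))) = exp (- \<i> * of_real (2 * pi * of_int (k $ i) * t))"
    using exp_minus_i_add_int_period[of "2 * pi * of_int (k $ i) * (t - 1)" "k $ i"]
    by (simp add: algebra_simps)
  then show ?thesis by (simp add: cube_shift_def fourier_kernel_add_axis)
qed

lemma fourier_kernel_mult_cnj: "fourier_kernel k x * cnj (fourier_kernel l x) = fourier_kernel (k - l) x"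
  unfolding fourier_kernel_def
  by (simp add: exp_cnj algebra_simps sum_subtractf flip: exp_add)

text \<open>For \<open>m\<^sub>i \<noteq> 0\<close>, the shift by half a period \<open>1 / (2 |m\<^sub>i|)\<close> in direction \<open>i\<close> negates the
  kernel but leaves its integral unchanged.\<close>
lemma integral_fourier_kernel:
  fixes m :: "int^'n"
  shows "integral (cbox 0 One) (fourier_kernel m) = (if m = 0 then 1 else 0)"
proof (cases "m = 0")
  case True
  have "fourier_kernel (0::int^'n) = (\<lambda>x. 1)" by (simp add: fourier_kernel_def fun_eq_iff)
  then show ?thesis using True by simp
next
  case False
  then obtain i where "m $ i \<noteq> 0" by (auto simp: vec_eq_iff)
  then have r: "1 \<le> \<bar>real_of_int (m $ i)\<bar>" by linarith
  define t where "t = 1 / (2 * \<bar>real_of_int (m $ i)\<bar>)"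
  have t: "0 \<le> t" "t \<le> 1" using r by (auto simp: t_def field_simps)
  have "2 * pi * of_int (m $ i) * t = (if m $ i > 0 then pi else - pi)"
    using r by (auto simp: t_def field_simps)
  then have half_period: "exp (- \<i> * of_real (2 * pi * of_int (m $ i) * t)) = -1"
    by (simp add: exp_minus)
  have "((\<lambda>x. fourier_kernel m (cube_shift t i x)) has_integral integral (cbox 0 One) (fourier_kernel m))
          (cbox 0 One)"
    by (rule has_integral_cube_shift[OF continuous_on_fourier_kernel cube_periodic_in_fourier_kernel t])
  then have "((\<lambda>x. - fourier_kernel m x) has_integral integral (cbox 0 One) (fourier_kernel m)) (cbox 0 One)"
    by (simp only: fourier_kernel_cube_shift half_period mult_minus1)
  from has_integral_neg[OF this]
  have "(fourier_kernel m has_integral - integral (cbox 0 One) (fourier_kernel m)) (cbox 0 One)"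
    by simp
  then have "integral (cbox 0 One) (fourier_kernel m) = - integral (cbox 0 One) (fourier_kernel m)"
    by (rule integral_unique)
  then show ?thesis using False by simp
qed

lemma has_integral_fourier_kernel_mult_cnj:
  "((\<lambda>x. fourier_kernel l x * cnj (fourier_kernel k x)) has_integral (if l = k then 1 else 0)) (cbox 0 One)"
proof -
  have "(fourier_kernel (l - k) has_integral integral (cbox 0 One) (fourier_kernel (l - k))) (cbox 0 One)"
    by (intro integrable_integral integrable_continuous continuous_on_fourier_kernel)
  then show ?thesis by (simp add: fourier_kernel_mult_cnj integral_fourier_kernel)
qed

lemma has_integral_fourier_partial_sum_products:
  fixes g :: "real^'n \<Rightarrow> real"
  assumes g: "continuous_on (cbox 0 One) g" and F: "finite F"
  defines "S \<equiv> \<lambda>x. \<Sum>k\<in>F. fourier_coeff g k * cnj (fourier_kernel k x)"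
    and "X \<equiv> \<Sum>k\<in>F. fourier_coeff g k * cnj (fourier_coeff g k)"
  shows "((\<lambda>x. of_real (g x) * cnj (S x)) has_integral X) (cbox 0 One)"
    and "((\<lambda>x. S x * of_real (g x)) has_integral X) (cbox 0 One)"
    and "((\<lambda>x. S x * cnj (S x)) has_integral X) (cbox 0 One)"
proof -
  let ?c = "fourier_coeff g"
  have coeff: "((\<lambda>x. of_real (g x) * fourier_kernel k x) has_integral ?c k) (cbox 0 One)" for k
    unfolding fourier_coeff_eq_integral_kernel
    by (intro integrable_integral integrable_continuous continuous_intros g)
  have coeff_cnj: "((\<lambda>x. of_real (g x) * cnj (fourier_kernel k x)) has_integral cnj (?c k)) (cbox 0 One)"
    for k using has_integral_cnj[THEN iffD2, OF coeff[of k]] by (simp add: o_def)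
  have "((\<lambda>x. \<Sum>k\<in>F. cnj (?c k) * (of_real (g x) * fourier_kernel k x)) has_integral
          (\<Sum>k\<in>F. cnj (?c k) * ?c k)) (cbox 0 One)"
    by (intro has_integral_sum[OF F] has_integral_mult_right coeff)
  then show "((\<lambda>x. of_real (g x) * cnj (S x)) has_integral X) (cbox 0 One)"
    by (simp add: S_def X_def sum_distrib_left algebra_simps)
  have "((\<lambda>x. \<Sum>k\<in>F. ?c k * (of_real (g x) * cnj (fourier_kernel k x))) has_integral
          (\<Sum>k\<in>F. ?c k * cnj (?c k))) (cbox 0 One)"
    by (intro has_integral_sum[OF F] has_integral_mult_right coeff_cnj)
  moreover have "(\<Sum>k\<in>F. ?c k * (of_real (g x) * cnj (fourier_kernel k x))) = S x * of_real (g x)" for x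
    unfolding S_def sum_distrib_right by (rule sum.cong) (simp_all add: algebra_simps)
  ultimately show "((\<lambda>x. S x * of_real (g x)) has_integral X) (cbox 0 One)"
    by (simp add: X_def)
  have "((\<lambda>x. \<Sum>k\<in>F. \<Sum>l\<in>F. (?c k * cnj (?c l)) * (fourier_kernel l x * cnj (fourier_kernel k x)))
          has_integral (\<Sum>k\<in>F. \<Sum>l\<in>F. (?c k * cnj (?c l)) * (if l = k then 1 else 0))) (cbox 0 One)"
    by (intro has_integral_sum[OF F] has_integral_mult_right has_integral_fourier_kernel_mult_cnj)
  moreover have "(\<Sum>k\<in>F. \<Sum>l\<in>F. (?c k * cnj (?c l)) * (if l = k then 1 else 0)) = X"
    using F by (simp add: X_def if_distrib cong: if_cong)
  moreover have "(\<Sum>k\<in>F. \<Sum>l\<in>F. (?c k * cnj (?c l)) * (fourier_kernel l x * cnj (fourier_kernel k x)))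
      = S x * cnj (S x)" for x
    unfolding S_def cnj_sum sum_product by (intro sum.cong refl) (simp add: mult_ac)
  ultimately show "((\<lambda>x. S x * cnj (S x)) has_integral X) (cbox 0 One)"
    by simp
qed

lemma bessel_inequality_fourier_coeff:
  fixes g :: "real^'n \<Rightarrow> real"
  assumes g: "continuous_on (cbox 0 One) g" and F: "finite F"
  shows "(\<Sum>k\<in>F. (cmod (fourier_coeff g k))\<^sup>2) \<le> integral (cbox 0 One) (\<lambda>x. (g x)\<^sup>2)"
proof -
  define S where "S x = (\<Sum>k\<in>F. fourier_coeff g k * cnj (fourier_kernel k x))" for x
  define X where "X = (\<Sum>k\<in>F. fourier_coeff g k * cnj (fourier_coeff g k))"
  have X: "X = of_real (\<Sum>k\<in>F. (cmod (fourier_coeff g k))\<^sup>2)"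
    unfolding X_def of_real_sum by (rule sum.cong) (simp_all only: complex_norm_square)
  have "((\<lambda>x. of_real ((g x)\<^sup>2) :: complex) has_integral of_real (integral (cbox 0 One) (\<lambda>x. (g x)\<^sup>2)))
          (cbox 0 One)"
    by (intro has_integral_of_real integrable_integral integrable_continuous continuous_intros g)
  then have "((\<lambda>x. of_real ((g x)\<^sup>2) - of_real (g x) * cnj (S x) - S x * of_real (g x) + S x * cnj (S x))
      has_integral (of_real (integral (cbox 0 One) (\<lambda>x. (g x)\<^sup>2)) - X - X + X)) (cbox 0 One)"
    using has_integral_fourier_partial_sum_products[OF g F]
    unfolding S_def X_def by (intro has_integral_add has_integral_diff)
  moreover have "of_real ((g x)\<^sup>2) - of_real (g x) * cnj (S x) - S x * of_real (g x) + S x * cnj (S x)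
      = of_real ((cmod (of_real (g x) - S x))\<^sup>2)" for x
  proof -
    have "of_real ((g x)\<^sup>2) - of_real (g x) * cnj (S x) - S x * of_real (g x) + S x * cnj (S x)
        = (of_real (g x) - S x) * cnj (of_real (g x) - S x)"
      by (simp add: power2_eq_square algebra_simps)
    then show ?thesis by (simp only: complex_norm_square)
  qed
  ultimately have "((\<lambda>x. of_real ((cmod (of_real (g x) - S x))\<^sup>2) :: complex) has_integral
      of_real (integral (cbox 0 One) (\<lambda>x. (g x)\<^sup>2) - (\<Sum>k\<in>F. (cmod (fourier_coeff g k))\<^sup>2))) (cbox 0 One)"
    by (simp add: X)
  from has_integral_Re[OF this]
  have "((\<lambda>x. (cmod (of_real (g x) - S x))\<^sup>2) has_integral
      integral (cbox 0 One) (\<lambda>x. (g x)\<^sup>2) - (\<Sum>k\<in>F. (cmod (fourier_coeff g k))\<^sup>2)) (cbox 0 One)"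
    by simp
  then have "0 \<le> integral (cbox 0 One) (\<lambda>x. (g x)\<^sup>2) - (\<Sum>k\<in>F. (cmod (fourier_coeff g k))\<^sup>2)"
    by (rule has_integral_nonneg) simp
  then show ?thesis by simp
qed

lemma fourier_coeff_diff:
  assumes "continuous_on (cbox 0 One) f" "continuous_on (cbox 0 One) g"
  shows "fourier_coeff (\<lambda>x. f x - g x) k = fourier_coeff f k - fourier_coeff g k"
proof -
  have "(\<lambda>x. of_real (f x) * fourier_kernel k x) integrable_on cbox 0 One"
    and "(\<lambda>x. of_real (g x) * fourier_kernel k x) integrable_on cbox 0 One"
    by (intro integrable_continuous continuous_intros assms)+
  then show ?thesis
    unfolding fourier_coeff_eq_integral_kernel by (simp add: left_diff_distrib integral_diff)
qed

lemma fourier_coeff_cube_shift: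
  assumes f: "continuous_on (cbox 0 One) f" "cube_periodic_in i f" and t: "0 \<le> t" "t \<le> 1"
  shows "fourier_coeff (\<lambda>x. f (cube_shift t i x)) k
       = exp (\<i> * of_real (2 * pi * of_int (k $ i) * t)) * fourier_coeff f k"
proof -
  define a where "a = 2 * pi * of_int (k $ i) * t"
  let ?h = "\<lambda>x. of_real (f x) * fourier_kernel k x"
  have "continuous_on (cbox 0 One) ?h" by (intro continuous_intros f(1))
  moreover have "cube_periodic_in i ?h"
    using f(2) cube_periodic_in_fourier_kernel[of i k] by (simp add: cube_periodic_in_def)
  ultimately have "((\<lambda>x. ?h (cube_shift t i x)) has_integral fourier_coeff f k) (cbox 0 One)"
    using has_integral_cube_shift[OF _ _ t] by (simp add: fourier_coeff_eq_integral_kernel)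
  from has_integral_mult_right[OF this, of "exp (\<i> * of_real a)"]
  have "((\<lambda>x. exp (\<i> * of_real a) * ?h (cube_shift t i x)) has_integral
          exp (\<i> * of_real a) * fourier_coeff f k) (cbox 0 One)" .
  moreover have "exp (\<i> * of_real a) * ?h (cube_shift t i x) = of_real (f (cube_shift t i x)) * fourier_kernel k x"
    for x
  proof -
    have "exp (\<i> * of_real a) * exp (- \<i> * of_real a) = 1" by (simp flip: exp_add)
    then show ?thesis by (simp add: fourier_kernel_cube_shift a_def mult.left_commute)
  qed
  ultimately have "((\<lambda>x. of_real (f (cube_shift t i x)) * fourier_kernel k x) has_integral
      exp (\<i> * of_real a) * fourier_coeff f k) (cbox 0 One)"
    by simp
  then show ?thesis
    unfolding fourier_coeff_eq_integral_kernel[of "\<lambda>x. f (cube_shift t i x)"] a_def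
    by (rule integral_unique)
qed

section \<open>Hoelder increments of a periodic function\<close>

lemma holder_bound_of_quotient_bound:
  fixes f :: "'a::real_normed_vector \<Rightarrow> real"
  assumes "\<forall>x\<in>S. \<forall>y\<in>S. x \<noteq> y \<longrightarrow> \<bar>f x - f y\<bar> / norm (x - y) powr s \<le> R"
  shows "\<forall>x\<in>S. \<forall>y\<in>S. \<bar>f x - f y\<bar> \<le> R * norm (x - y) powr s"
proof (intro ballI)
  fix x y assume "x \<in> S" "y \<in> S"
  show "\<bar>f x - f y\<bar> \<le> R * norm (x - y) powr s"
  proof (cases "x = y")
    case False
    then have "0 < norm (x - y) powr s" by simp
    then show ?thesis using assms \<open>x \<in> S\<close> \<open>y \<in> S\<close> False by (simp add: pos_divide_le_eq)
  qed simp
qed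

lemma holder_continuous_on:
  fixes f :: "'a::metric_space \<Rightarrow> real"
  assumes "0 < s" and holder: "\<forall>x\<in>S. \<forall>y\<in>S. \<bar>f x - f y\<bar> \<le> R * dist x y powr s"
  shows "continuous_on S f"
  unfolding continuous_on_def
proof
  fix x assume x: "x \<in> S"
  have "((\<lambda>y. dist y x powr s) \<longlongrightarrow> 0) (at x within S)"
    by (rule tendsto_zero_powrI) (auto intro!: tendsto_eq_intros simp: \<open>0 < s\<close>)
  then have "((\<lambda>y. R * dist y x powr s) \<longlongrightarrow> 0) (at x within S)"
    by (simp add: tendsto_mult_right_zero)
  moreover have "\<forall>\<^sub>F y in at x within S. norm (f y - f x) \<le> R * dist y x powr s"
    using holder x by (auto simp: eventually_at_filter)
  ultimately have "((\<lambda>y. f y - f x) \<longlongrightarrow> 0) (at x within S)"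
    by (rule Lim_null_comparison[rotated])
  then show "(f \<longlongrightarrow> f x) (at x within S)" by (simp add: LIM_zero_iff)
qed

lemma cube_shift_increment_le:
  assumes holder: "\<forall>x\<in>cbox 0 One. \<forall>y\<in>cbox 0 One. \<bar>f x - f y\<bar> \<le> R * norm (x - y) powr s"
    and x: "x \<in> cbox 0 One" and t: "0 \<le> t" "x $ i + t \<le> 1"
  shows "\<bar>f (cube_shift t i x) - f x\<bar> \<le> R * t powr s"
proof -
  have "0 \<le> x $ i" using x by (simp add: mem_box_cart)
  then have "cube_shift t i x \<in> cbox 0 One"
    using cube_shift_mem_unit_cube[OF x t(1)] t by simp
  moreover have "norm (cube_shift t i x - x) = t"
    using t by (simp add: cube_shift_def)
  ultimately show ?thesis using holder x by fastforce
qed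

text \<open>When the shift wraps around, compare both points with the face \<open>x\<^sub>i = 0\<close>, which the
  periodicity identifies with the face \<open>x\<^sub>i = 1\<close>.\<close>
lemma cube_shift_increment_le_wrap:
  assumes holder: "\<forall>x\<in>cbox 0 One. \<forall>y\<in>cbox 0 One. \<bar>f x - f y\<bar> \<le> R * norm (x - y) powr s"
    and periodic: "cube_periodic_in i f" and "0 \<le> R" "0 \<le> s"
    and x: "x \<in> cbox 0 One" and t: "t \<le> 1" "1 < x $ i + t"
  shows "\<bar>f (cube_shift t i x) - f x\<bar> \<le> 2 * R * t powr s"
proof -
  define y where "y = x - x $ i *\<^sub>R axis i 1"
  have xi: "0 \<le> x $ i" "x $ i \<le> 1" using x by (simp_all add: mem_box_cart One_cart)
  have y: "y \<in> cbox 0 One" "y $ i = 0"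
    using x by (auto simp: y_def mem_box_cart One_cart axis_def)
  have shift: "cube_shift t i x = y + (x $ i + t - 1) *\<^sub>R axis i 1"
    using t by (simp add: cube_shift_def y_def algebra_simps)
  have shift_mem: "cube_shift t i x \<in> cbox 0 One"
    using cube_shift_mem_unit_cube[OF x _ t(1)] t xi by simp
  have y_one: "y + axis i 1 = x + (1 - x $ i) *\<^sub>R axis i 1"
    by (simp add: y_def algebra_simps)
  have "\<bar>f (cube_shift t i x) - f y\<bar> \<le> R * (x $ i + t - 1) powr s"
    using holder shift_mem y(1) t by (fastforce simp: shift)
  also have "\<dots> \<le> R * t powr s"
    using assms(3,4) xi t by (intro mult_left_mono powr_mono2) auto
  finally have near_zero: "\<bar>f (cube_shift t i x) - f y\<bar> \<le> R * t powr s" .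
  have "y + axis i 1 \<in> cbox 0 One"
    using x by (auto simp: y_def mem_box_cart One_cart axis_def)
  then have "\<bar>f (y + axis i 1) - f x\<bar> \<le> R * (1 - x $ i) powr s"
    using holder x xi by (fastforce simp: y_one)
  also have "\<dots> \<le> R * t powr s"
    using assms(3,4) xi t by (intro mult_left_mono powr_mono2) auto
  finally have near_one: "\<bar>f (y + axis i 1) - f x\<bar> \<le> R * t powr s" .
  have "f (y + axis i 1) = f y" using periodic y by (simp add: cube_periodic_in_def)
  then show ?thesis using near_zero near_one by linarith
qed

lemma cube_shift_increment_le_double:
  assumes holder: "\<forall>x\<in>cbox 0 One. \<forall>y\<in>cbox 0 One. \<bar>f x - f y\<bar> \<le> R * norm (x - y) powr s"
    and periodic: "cube_periodic_in i f" and R: "0 \<le> R" and s: "0 \<le> s"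
    and x: "x \<in> cbox 0 One" and t: "0 \<le> t" "t \<le> 1"
  shows "\<bar>f (cube_shift t i x) - f x\<bar> \<le> 2 * R * t powr s"
proof (cases "x $ i + t \<le> 1")
  case True
  then show ?thesis using cube_shift_increment_le[OF holder x t(1) True] R by simp
next
  case False
  then show ?thesis by (intro cube_shift_increment_le_wrap[OF holder periodic R s x t(2)]) simp
qed

lemma integral_cube_shift_increment_sq_le:
  fixes f :: "real^'n \<Rightarrow> real"
  assumes holder: "\<forall>x\<in>cbox 0 One. \<forall>y\<in>cbox 0 One. \<bar>f x - f y\<bar> \<le> R * norm (x - y) powr s"
    and periodic: "cube_periodic_in i f" and R: "0 \<le> R" and s: "0 < s" and t: "0 \<le> t" "t \<le> 1"
  shows "integral (cbox 0 One) (\<lambda>x. (f (cube_shift t i x) - f x)\<^sup>2) \<le> R\<^sup>2 * t powr (2 * s) * (1 + 3 * t)"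
proof -
  define \<phi> where "\<phi> = (\<lambda>x. (f (cube_shift t i x) - f x)\<^sup>2)"
  define B where "B = R * t powr s"
  have B: "0 \<le> B" "B\<^sup>2 = R\<^sup>2 * t powr (2 * s)"
    using R by (simp_all add: B_def power_mult_distrib power2_eq_square flip: powr_add)
  have "continuous_on (cbox 0 One) f"
    by (rule holder_continuous_on[OF s]) (use holder in \<open>simp add: dist_norm\<close>)
  then have \<phi>_cont: "continuous_on (cbox 0 One) \<phi>"
    unfolding \<phi>_def by (intro continuous_intros continuous_on_cube_shift periodic t)
  have sq_le: "\<phi> x \<le> b\<^sup>2" if "\<bar>f (cube_shift t i x) - f x\<bar> \<le> b" for x b
    unfolding \<phi>_def using that by (metis abs_ge_zero power2_abs power_mono)
  have "integral (cbox 0 One) \<phi> = integral (lower_slab i (1 - t)) \<phi> + integral (upper_slab i (1 - t)) \<phi>"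
    using t by (intro integral_unit_cube_eq_slabs[OF \<phi>_cont]) auto
  also have "\<dots> \<le> (1 - t) * B\<^sup>2 + (1 - (1 - t)) * (2 * B)\<^sup>2"
  proof (intro add_mono integral_lower_slab_le[OF \<phi>_cont] integral_upper_slab_le[OF \<phi>_cont])
    fix x :: "real^'n" assume "x \<in> cbox 0 One"
    then show "x $ i \<le> 1 - t \<Longrightarrow> \<phi> x \<le> B\<^sup>2"
      using cube_shift_increment_le[OF holder _ t(1)] sq_le by (simp add: B_def)
    show "\<phi> x \<le> (2 * B)\<^sup>2"
      by (rule sq_le) (use cube_shift_increment_le_double[OF holder periodic R _ \<open>x \<in> cbox 0 One\<close> t] s
                        in \<open>simp add: B_def mult.assoc\<close>)
  qed (use t in auto)
  also have "\<dots> = B\<^sup>2 * (1 + 3 * t)"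
    by (simp add: power2_eq_square algebra_simps)
  finally show ?thesis unfolding \<phi>_def B(2) .
qed

section \<open>Dyadic blocks of Fourier coefficients\<close>

lemma norm_exp_i_minus_one_sq: "(cmod (exp (\<i> * of_real a) - 1))\<^sup>2 = 2 - 2 * cos a"
proof -
  have "(cmod (exp (\<i> * of_real a) - 1))\<^sup>2 = (cos a - 1)\<^sup>2 + (sin a)\<^sup>2"
    by (simp add: cmod_power2 Re_exp Im_exp)
  also have "\<dots> = 2 - 2 * cos a"
    using sin_cos_squared_add[of a] by (simp add: power2_eq_square algebra_simps)
  finally show ?thesis .
qed

lemma cos_dyadic_le_minus_half:
  fixes k :: int and N :: nat
  assumes "1 \<le> N" "int N \<le> \<bar>k\<bar>" "\<bar>k\<bar> < 2 * int N"
  shows "cos (2 * pi * of_int k * (1 / (3 * real N))) \<le> - 1 / 2"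
proof -
  define a where "a = 2 * pi * \<bar>of_int k\<bar> / (3 * real N)"
  have k: "real N \<le> \<bar>of_int k\<bar>" "\<bar>of_int k\<bar> \<le> 2 * real N" "0 < real N"
    using assms by linarith+
  have "2 * pi / 3 \<le> a" "a \<le> 4 * pi / 3"
    unfolding a_def using k pi_gt_zero by (simp_all add: field_simps)
  then have "\<bar>a - pi\<bar> \<le> pi / 3" by linarith
  then have "cos (pi / 3) \<le> cos \<bar>a - pi\<bar>"
    by (intro cos_monotone_0_pi_le) auto
  then have "cos a \<le> - 1 / 2" by (simp add: cos_60)
  moreover have "\<bar>2 * pi * of_int k * (1 / (3 * real N))\<bar> = a"
    unfolding a_def using k by (simp add: abs_mult)
  then have "cos (2 * pi * of_int k * (1 / (3 * real N))) = cos a"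
    by (metis cos_abs_real)
  ultimately show ?thesis by simp
qed

lemma fourier_dyadic_block_le:
  assumes holder: "\<forall>x\<in>cbox 0 One. \<forall>y\<in>cbox 0 One. \<bar>f x - f y\<bar> \<le> R * norm (x - y) powr s"
    and periodic: "cube_periodic_in i f" and R: "0 \<le> R" and s: "0 < s"
    and N: "1 \<le> N" and G: "finite G" "\<And>k. k \<in> G \<Longrightarrow> int N \<le> \<bar>k $ i\<bar> \<and> \<bar>k $ i\<bar> < 2 * int N"
  shows "(\<Sum>k\<in>G. (cmod (fourier_coeff f k))\<^sup>2) \<le> 2 / 3 * R\<^sup>2 * (3 * real N) powr (- 2 * s)"
proof -
  define t where "t = 1 / (3 * real N)"
  have t: "0 \<le> t" "t \<le> 1" "t \<le> 1 / 3" using N by (auto simp: t_def field_simps)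
  define g where "g x = f (cube_shift t i x) - f x" for x
  have f_cont: "continuous_on (cbox 0 One) f"
    by (rule holder_continuous_on[OF s]) (use holder in \<open>simp add: dist_norm\<close>)
  have shift_cont: "continuous_on (cbox 0 One) (\<lambda>x. f (cube_shift t i x))"
    by (rule continuous_on_cube_shift[OF f_cont periodic t(1,2)])
  have g_cont: "continuous_on (cbox 0 One) g"
    unfolding g_def by (intro continuous_intros shift_cont f_cont)
  have coeff: "fourier_coeff g k = (exp (\<i> * of_real (2 * pi * of_int (k $ i) * t)) - 1) * fourier_coeff f k"
    for k unfolding g_def fourier_coeff_diff[OF shift_cont f_cont]
    by (simp add: fourier_coeff_cube_shift[OF f_cont periodic t(1,2)] left_diff_distrib)
  have "3 * (cmod (fourier_coeff f k))\<^sup>2 \<le> (cmod (fourier_coeff g k))\<^sup>2" if "k \<in> G" for k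
  proof -
    have "cos (2 * pi * of_int (k $ i) * t) \<le> - 1 / 2"
      unfolding t_def using cos_dyadic_le_minus_half N G(2)[OF that] by blast
    then have "3 \<le> (cmod (exp (\<i> * of_real (2 * pi * of_int (k $ i) * t)) - 1))\<^sup>2"
      by (simp only: norm_exp_i_minus_one_sq)
    then show ?thesis
      by (simp add: coeff norm_mult power_mult_distrib mult_right_mono)
  qed
  then have "3 * (\<Sum>k\<in>G. (cmod (fourier_coeff f k))\<^sup>2) \<le> (\<Sum>k\<in>G. (cmod (fourier_coeff g k))\<^sup>2)"
    by (simp add: sum_distrib_left sum_mono)
  also have "\<dots> \<le> integral (cbox 0 One) (\<lambda>x. (g x)\<^sup>2)"
    by (rule bessel_inequality_fourier_coeff[OF g_cont G(1)])
  also have "\<dots> \<le> R\<^sup>2 * t powr (2 * s) * (1 + 3 * t)"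
    unfolding g_def by (rule integral_cube_shift_increment_sq_le[OF holder periodic R s t(1,2)])
  also have "\<dots> \<le> R\<^sup>2 * t powr (2 * s) * 2"
    using t by (intro mult_left_mono) auto
  also have "t powr (2 * s) = (3 * real N) powr (- 2 * s)"
    by (simp add: t_def powr_divide powr_minus_divide)
  finally show ?thesis by simp
qed

lemma exists_dyadic_block:
  fixes m n :: nat
  assumes "n \<le> m" "m < 2 ^ J * n"
  shows "\<exists>j<J. 2 ^ j * n \<le> m \<and> m < 2 * (2 ^ j * n)"
  using assms(2)
proof (induction J)
  case (Suc J)
  show ?case
  proof (cases "m < 2 ^ J * n")
    case True
    then show ?thesis using Suc.IH less_Suc_eq by blast
  next
    case False
    then show ?thesis using Suc.prems by (intro exI[of _ J]) auto
  qed
qed (use assms(1) in simp)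

lemma powr_dyadic:
  "real (2 ^ j * n) powr (- a) = real n powr (- a) * (2 powr (- a)) ^ j"
proof -
  have "real (2 ^ j * n) powr (- a) = (2 powr real j) powr (- a) * real n powr (- a)"
    by (simp add: powr_mult powr_realpow)
  also have "(2 powr real j) powr (- a) = (2 powr (- a)) ^ j"
    by (simp add: powr_powr powr_power mult.commute)
  finally show ?thesis by simp
qed

lemma sum_le_of_dyadic_block_bounds:
  fixes \<theta> :: "'a \<Rightarrow> real" and \<kappa> :: "'a \<Rightarrow> nat"
  assumes nonneg: "\<And>k. 0 \<le> \<theta> k" and a: "0 < a" and c: "0 \<le> c"
    and block: "\<And>N G. 1 \<le> N \<Longrightarrow> finite G \<Longrightarrow> (\<And>k. k \<in> G \<Longrightarrow> N \<le> \<kappa> k \<and> \<kappa> k < 2 * N)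
                  \<Longrightarrow> sum \<theta> G \<le> c * real N powr (- a)"
    and H: "finite H" "\<And>k. k \<in> H \<Longrightarrow> M < \<kappa> k"
  shows "sum \<theta> H \<le> c * (real M + 1) powr (- a) / (1 - 2 powr (- a))"
proof -
  define q where "q = (2::real) powr (- a)"
  have q: "0 < q" "q < 1" using a by (auto simp: q_def powr_less_one)
  define J where "J = Suc (Max (insert 0 (\<kappa> ` H)))"
  define block_set where "block_set j = {k. 2 ^ j * (M + 1) \<le> \<kappa> k \<and> \<kappa> k < 2 * (2 ^ j * (M + 1))}" for j
  have cover: "\<theta> k \<le> (\<Sum>j<J. if k \<in> block_set j then \<theta> k else 0)" if k: "k \<in> H" for k
  proof -
    have "\<kappa> k < J" using H(1) k by (simp add: J_def le_imp_less_Suc)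
    also have "J < 2 ^ J" by (rule less_exp)
    also have "(2::nat) ^ J \<le> 2 ^ J * (M + 1)" by simp
    finally have "\<kappa> k < 2 ^ J * (M + 1)" .
    then obtain j where "j < J" "k \<in> block_set j"
      using exists_dyadic_block[of "M + 1" "\<kappa> k" J] H(2)[OF k] by (auto simp: block_set_def)
    then show ?thesis
      using member_le_sum[of j "{..<J}" "\<lambda>j. if k \<in> block_set j then \<theta> k else 0"] nonneg by auto
  qed
  have "sum \<theta> H \<le> (\<Sum>k\<in>H. \<Sum>j<J. if k \<in> block_set j then \<theta> k else 0)"
    by (rule sum_mono) (rule cover)
  also have "\<dots> = (\<Sum>j<J. sum \<theta> (H \<inter> block_set j))"
    using H(1) by (subst sum.swap) (simp add: sum.inter_restrict)
  also have "\<dots> \<le> (\<Sum>j<J. c * real (2 ^ j * (M + 1)) powr (- a))"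
    by (intro sum_mono block) (use H(1) in \<open>auto simp: block_set_def Suc_le_eq\<close>)
  also have "\<dots> = c * (real M + 1) powr (- a) * (\<Sum>j<J. q ^ j)"
    unfolding powr_dyadic q_def by (simp add: sum_distrib_left mult_ac add.commute)
  also have "(\<Sum>j<J. q ^ j) \<le> 1 / (1 - q)"
    using q by (simp add: sum_gp_strict divide_right_mono)
  then have "c * (real M + 1) powr (- a) * (\<Sum>j<J. q ^ j) \<le> c * (real M + 1) powr (- a) * (1 / (1 - q))"
    using c by (intro mult_left_mono) auto
  finally show ?thesis by (simp add: q_def)
qed

lemma sum_le_card_mult_of_cover:
  fixes \<theta> :: "'a \<Rightarrow> real" and P :: "'i::finite \<Rightarrow> 'a \<Rightarrow> bool"
  assumes "\<And>k. 0 \<le> \<theta> k" "finite F" "\<And>k. k \<in> F \<Longrightarrow> \<exists>i. P i k"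
    and "\<And>i. sum \<theta> {k\<in>F. P i k} \<le> K"
  shows "sum \<theta> F \<le> real CARD('i) * K"
proof -
  have "sum \<theta> F \<le> (\<Sum>k\<in>F. \<Sum>i\<in>UNIV. if P i k then \<theta> k else 0)"
  proof (rule sum_mono)
    fix k assume "k \<in> F"
    then obtain i where "P i k" using assms(3) by blast
    then show "\<theta> k \<le> (\<Sum>i\<in>UNIV. if P i k then \<theta> k else 0)"
      using member_le_sum[of i UNIV "\<lambda>i. if P i k then \<theta> k else 0"] assms(1) by auto
  qed
  also have "\<dots> = (\<Sum>i\<in>UNIV. sum \<theta> {k\<in>F. P i k})"
    using assms(2) by (subst sum.swap) (simp add: sum.inter_filter)
  also have "\<dots> \<le> real CARD('i) * K"
    using sum_mono[of UNIV "\<lambda>i. sum \<theta> {k\<in>F. P i k}" "\<lambda>_. K"] assms(4) by simp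
  finally show ?thesis .
qed

lemma summable_on_infsum_le_of_finite_sums:
  fixes \<theta> :: "'a \<Rightarrow> real"
  assumes "\<And>k. k \<in> A \<Longrightarrow> 0 \<le> \<theta> k" "\<And>F. finite F \<Longrightarrow> F \<subseteq> A \<Longrightarrow> sum \<theta> F \<le> B"
  shows "\<theta> summable_on A \<and> infsum \<theta> A \<le> B"
proof -
  have "\<theta> summable_on A"
    using assms by (intro nonneg_bdd_above_summable_on bdd_aboveI2[where M = B]) auto
  then show ?thesis using assms(2) infsum_le_finite_sums by blast
qed

lemma dyadic_constant_le_C_const:
  assumes "0 < s"
  shows "2 / 3 * 3 powr (- 2 * s) / (1 - 2 powr (- 2 * s)) \<le> C_const s"
proof -
  have "3 powr (- 2 * s) \<le> 3 powr (- s)" using assms by (intro powr_mono) auto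
  then have "2 / 3 * 3 powr (- 2 * s) \<le> 3 powr (- s)"
    using powr_ge_zero[of 3 "- 2 * s"] by linarith
  also have "\<dots> \<le> 2 powr (2 * s) * 3 powr (- s)"
    using assms by (simp add: ge_one_powr_ge_zero)
  finally have "2 / 3 * 3 powr (- 2 * s) \<le> 2 powr (2 * s) * 3 powr (- s)" .
  moreover have "0 < 1 - 2 powr (- 2 * s)" using assms by (simp add: powr_less_one)
  ultimately show ?thesis unfolding C_const_def by (intro divide_right_mono) auto
qed

lemma cube_periodic_in_of_face_reflection:
  assumes "\<forall>x\<in>cbox (0::real^'n) One. \<forall>i. x $ i \<in> {0, 1} \<longrightarrow>
             f x = f (\<chi> j. if j = i then 1 - x $ i else x $ j)"
  shows "cube_periodic_in i f"
  unfolding cube_periodic_in_def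
proof (intro ballI impI)
  fix x :: "real^'n" assume "x \<in> cbox 0 One" "x $ i = 0"
  moreover have "(\<chi> j. if j = i then 1 - x $ i else x $ j) = x + axis i 1"
    using \<open>x $ i = 0\<close> by (simp add: vec_eq_iff axis_def)
  ultimately show "f (x + axis i 1) = f x" using assms by force
qed

lemma fourier_tail_in_coordinate_le:
  assumes holder: "\<forall>x\<in>cbox 0 One. \<forall>y\<in>cbox 0 One. \<bar>f x - f y\<bar> \<le> R * norm (x - y) powr s"
    and periodic: "cube_periodic_in i f" and R: "0 \<le> R" and s: "0 < s" and F: "finite F"
  shows "(\<Sum>k | k \<in> F \<and> int M < \<bar>k $ i\<bar>. (cmod (fourier_coeff f k))\<^sup>2)
           \<le> C_const s * R\<^sup>2 * (real M + 1) powr (- 2 * s)"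
proof -
  let ?\<theta> = "\<lambda>k. (cmod (fourier_coeff f k))\<^sup>2"
  have "sum ?\<theta> {k\<in>F. int M < \<bar>k $ i\<bar>}
      \<le> 2 / 3 * 3 powr (- 2 * s) * R\<^sup>2 * (real M + 1) powr (- (2 * s)) / (1 - 2 powr (- (2 * s)))"
  proof (rule sum_le_of_dyadic_block_bounds[where \<kappa> = "\<lambda>k. nat \<bar>k $ i\<bar>"])
    fix N G assume "1 \<le> N" "finite G" "\<And>k. k \<in> G \<Longrightarrow> N \<le> nat \<bar>k $ i\<bar> \<and> nat \<bar>k $ i\<bar> < 2 * N"
    then have "sum ?\<theta> G \<le> 2 / 3 * R\<^sup>2 * (3 * real N) powr (- 2 * s)"
      by (intro fourier_dyadic_block_le[OF holder periodic R s]) (auto simp: le_nat_iff nat_less_iff)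
    then show "sum ?\<theta> G \<le> 2 / 3 * 3 powr (- 2 * s) * R\<^sup>2 * real N powr (- (2 * s))"
      by (simp add: powr_mult mult_ac)
  qed (use F s in auto)
  also have "\<dots> = 2 / 3 * 3 powr (- 2 * s) / (1 - 2 powr (- 2 * s)) * (R\<^sup>2 * (real M + 1) powr (- 2 * s))"
    by simp
  also have "\<dots> \<le> C_const s * (R\<^sup>2 * (real M + 1) powr (- 2 * s))"
    by (rule mult_right_mono[OF dyadic_constant_le_C_const[OF s]]) simp
  finally show ?thesis by (simp add: mult_ac)
qed

theorem propositionE2:
  fixes f :: "real ^ 'n \<Rightarrow> real" and s R :: real and M :: nat
  assumes "0 < s" "s < 1" "0 < R"
    and holder: "\<forall>x\<in>cbox (0::real^'n) One. \<forall>y\<in>cbox (0::real^'n) One. x \<noteq> y \<longrightarrow>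
                  \<bar>f x - f y\<bar> / norm (x - y) powr s \<le> R"
    and periodic: "\<forall>x\<in>cbox (0::real^'n) One. \<forall>i. x $ i \<in> {0, 1} \<longrightarrow>
                  f x = f (\<chi> j. if j = i then 1 - x $ i else x $ j)"
  shows "(\<lambda>k. (cmod (fourier_coeff f k))\<^sup>2) summable_on {k :: int ^ 'n. \<exists>i. \<bar>k $ i\<bar> > int M}
    \<and> (\<Sum>\<^sub>\<infinity>k\<in>{k :: int ^ 'n. \<exists>i. \<bar>k $ i\<bar> > int M}. (cmod (fourier_coeff f k))\<^sup>2)
        \<le> C_const s * real CARD('n) * R\<^sup>2 * (real M + 1) powr (- 2 * s)"
proof -
  have holder': "\<forall>x\<in>cbox 0 One. \<forall>y\<in>cbox 0 One. \<bar>f x - f y\<bar> \<le> R * norm (x - y) powr s"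
    by (rule holder_bound_of_quotient_bound[OF holder])
  have "(\<Sum>k\<in>F. (cmod (fourier_coeff f k))\<^sup>2)
          \<le> real CARD('n) * (C_const s * R\<^sup>2 * (real M + 1) powr (- 2 * s))"
    if "finite F" "F \<subseteq> {k. \<exists>i. \<bar>k $ i\<bar> > int M}" for F
  proof (rule sum_le_card_mult_of_cover[where P = "\<lambda>i k. int M < \<bar>k $ i\<bar>"])
    fix i show "(\<Sum>k | k \<in> F \<and> int M < \<bar>k $ i\<bar>. (cmod (fourier_coeff f k))\<^sup>2)
                  \<le> C_const s * R\<^sup>2 * (real M + 1) powr (- 2 * s)"
      using assms(1,3) \<open>finite F\<close>
      by (intro fourier_tail_in_coordinate_le[OF holder' cube_periodic_in_of_face_reflection[OF periodic]])
         auto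
  qed (use that in auto)
  then show ?thesis
    by (intro summable_on_infsum_le_of_finite_sums) (auto simp: mult_ac)
qed

end
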